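(* There exist pairs of measurement channels $\Phi_M,\Phi_N$ corresponding to commuting $2$-outcome POVMs ($[M_0,N_0]=[M_1,N_1]=0$) that form a Maximal Entanglement Best Case pair. For instance, $M_0=\begin{pmatrix}0.9&0\\0&0.6\end{pmatrix}$, $M_1=I-M_0$, $N_0=\begin{pmatrix}0.5&0\\0&0.2\end{pmatrix}$, $N_1=I-N_0$, for which $M_0-N_0=0.4\,I_2$, give a MEBC pair.
   Context: The measurement channel of a POVM $M$ is $\Phi_M(\rho)=\sum_i\operatorname{Tr}(\rho M_i)\,|i\rangle\langle i|$. With $\Delta_\Phi=\Phi_M-\Phi_N$, Choi operator $J(\mathcal{S})=\sum_{ij}\mathcal{S}(|i\rangle\langle j|)\otimes|i\rangle\langle j|$, input dimension $d$, ME-norm $\|\mathcal{S}\|_{\mathrm{ME}}=\|J(\mathcal{S})/d\|_1$ and diamond norm $\|\mathcal{S}\|_\diamond=\max_{\rho_{AA'}}\|(\mathcal{S}\otimes I_{A'})\rho_{AA'}\|_1$, the pair is Maximal Entanglement Best Case (MEBC) if $\|\Delta_\Phi\|_{\mathrm{ME}}=\|\Delta_\Phi\|_\diamond$, i.e. a maximally entangled input state is optimal for discriminating the two channels with uniform priors. *)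

theory Defs
  imports Complex_Main "Jordan_Normal_Form.Matrix"
begin

definition mtrace :: "complex mat \<Rightarrow> complex" where
  "mtrace A = (\<Sum>i<dim_row A. A $$ (i,i))"

definition adjoint :: "complex mat \<Rightarrow> complex mat" where
  "adjoint A = mat (dim_col A) (dim_row A) (\<lambda>(i,j). cnj (A $$ (j,i)))"

definition psd :: "nat \<Rightarrow> complex mat \<Rightarrow> bool" where
  "psd n A \<longleftrightarrow> A \<in> carrier_mat n n \<and> adjoint A = A \<and>
     (\<forall>v \<in> carrier_vec n. 0 \<le> Re (\<Sum>i<n. \<Sum>j<n. cnj (v $ i) * A $$ (i,j) * v $ j))"

definition mat_sqrt :: "nat \<Rightarrow> complex mat \<Rightarrow> complex mat" where
  "mat_sqrt n A = (THE B. psd n B \<and> B * B = A)"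

definition trace_norm :: "complex mat \<Rightarrow> real" where
  "trace_norm X = Re (mtrace (mat_sqrt (dim_col X) (adjoint X * X)))"

definition density :: "nat \<Rightarrow> complex mat \<Rightarrow> bool" where
  "density n \<rho> \<longleftrightarrow> psd n \<rho> \<and> mtrace \<rho> = 1"

definition ketbra :: "nat \<Rightarrow> nat \<Rightarrow> nat \<Rightarrow> complex mat" where
  "ketbra n i j = mat n n (\<lambda>(a,b). if a = i \<and> b = j then 1 else 0)"

text \<open>Kronecker (tensor) product, first factor is the most significant index.\<close>
definition kron :: "complex mat \<Rightarrow> complex mat \<Rightarrow> complex mat" where
  "kron A B = mat (dim_row A * dim_row B) (dim_col A * dim_col B)
     (\<lambda>(i,j). A $$ (i div dim_row B, j div dim_col B) * B $$ (i mod dim_row B, j mod dim_col B))"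

text \<open>A map \<open>S\<close> from d x d matrices to k x k matrices.
  Choi operator \<open>J(S) = \<Sum>_{ij} S(|i\<rangle>\<langle>j|) \<otimes> |i\<rangle>\<langle>j|\<close> (sum written entrywise).\<close>
definition choi :: "nat \<Rightarrow> nat \<Rightarrow> (complex mat \<Rightarrow> complex mat) \<Rightarrow> complex mat" where
  "choi d k S = mat (k*d) (k*d)
     (\<lambda>(r,c). \<Sum>i<d. \<Sum>j<d. kron (S (ketbra d i j)) (ketbra d i j) $$ (r,c))"

text \<open>Block (a,b) of a matrix on \<open>A \<otimes> A'\<close> with dim A = d, dim A' = n.\<close>
definition block :: "nat \<Rightarrow> nat \<Rightarrow> complex mat \<Rightarrow> nat \<Rightarrow> nat \<Rightarrow> complex mat" where
  "block d n \<rho> a b = mat d d (\<lambda>(i,j). \<rho> $$ (i*n + a, j*n + b))"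

text \<open>\<open>(S \<otimes> I_{A'}) \<rho>\<close> where \<open>\<rho> = \<Sum>_{ab} block_{ab} \<otimes> |a\<rangle>\<langle>b|\<close>.\<close>
definition ext_id :: "nat \<Rightarrow> nat \<Rightarrow> nat \<Rightarrow> (complex mat \<Rightarrow> complex mat) \<Rightarrow> complex mat \<Rightarrow> complex mat" where
  "ext_id d k n S \<rho> = mat (k*n) (k*n)
     (\<lambda>(r,c). \<Sum>a<n. \<Sum>b<n. kron (S (block d n \<rho> a b)) (ketbra n a b) $$ (r,c))"

definition me_norm :: "nat \<Rightarrow> nat \<Rightarrow> (complex mat \<Rightarrow> complex mat) \<Rightarrow> real" where
  "me_norm d k S = trace_norm ((1 / of_nat d) \<cdot>\<^sub>m choi d k S)"

definition diamond_norm :: "nat \<Rightarrow> nat \<Rightarrow> (complex mat \<Rightarrow> complex mat) \<Rightarrow> real" where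
  "diamond_norm d k S = Sup {trace_norm (ext_id d k n S \<rho>) | n \<rho>. 1 \<le> n \<and> density (d*n) \<rho>}"

definition is_povm :: "nat \<Rightarrow> nat \<Rightarrow> (nat \<Rightarrow> complex mat) \<Rightarrow> bool" where
  "is_povm d K M \<longleftrightarrow> (\<forall>i<K. psd d (M i)) \<and>
     (\<forall>r<d. \<forall>c<d. (\<Sum>i<K. M i $$ (r,c)) = (1\<^sub>m d) $$ (r,c))"

definition meas_channel :: "nat \<Rightarrow> (nat \<Rightarrow> complex mat) \<Rightarrow> complex mat \<Rightarrow> complex mat" where
  "meas_channel K M \<rho> = mat K K (\<lambda>(i,j). if i = j then mtrace (\<rho> * M i) else 0)"

definition MEBC :: "nat \<Rightarrow> nat \<Rightarrow> (nat \<Rightarrow> complex mat) \<Rightarrow> (nat \<Rightarrow> complex mat) \<Rightarrow> bool" where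
  "MEBC d K M N \<longleftrightarrow>
     (let \<Delta> = (\<lambda>\<rho>. meas_channel K M \<rho> - meas_channel K N \<rho>)
      in me_norm d K \<Delta> = diamond_norm d K \<Delta>)"

definition M0ex :: "complex mat" where
  "M0ex = mat 2 2 (\<lambda>(i,j). if i = j then (if i = 0 then 0.9 else 0.6) else 0)"
definition N0ex :: "complex mat" where
  "N0ex = mat 2 2 (\<lambda>(i,j). if i = j then (if i = 0 then 0.5 else 0.2) else 0)"
definition Mex :: "nat \<Rightarrow> complex mat" where
  "Mex i = (if i = 0 then M0ex else 1\<^sub>m 2 - M0ex)"
definition Nex :: "nat \<Rightarrow> complex mat" where
  "Nex i = (if i = 0 then N0ex else 1\<^sub>m 2 - N0ex)"

end

theory Submission
  imports Defs
begin

text \<open>If \<open>M\<^sub>i - N\<^sub>i = x\<^sub>i I\<close> for every outcome \<open>i\<close>, the difference \<open>\<Delta>\<close> of the two measurement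
  channels is the trace-and-prepare map \<open>Y \<mapsto> tr(Y) diag(x)\<close>. Then
  \<open>(\<Delta> \<otimes> id)(\<rho>) = diag(x) \<otimes> tr\<^sub>A \<rho>\<close> for every state \<open>\<rho>\<close> on \<open>A \<otimes> A'\<close>, whose trace norm is
  \<open>\<Sum>\<^sub>i |x\<^sub>i| tr \<rho> = \<Sum>\<^sub>i |x\<^sub>i|\<close> independently of \<open>\<rho>\<close>; so the maximally entangled state, like every
  other state, attains the diamond norm. Trace norms are computed through the uniqueness of
  positive semidefinite square roots: for psd \<open>T\<close>, \<open>diag(x) \<otimes> T\<close> is hermitian with square
  \<open>(diag|x| \<otimes> T)\<^sup>2\<close>.\<close>

lemma sum_lessThan_mult_split:
  fixes g :: "nat \<Rightarrow> 'a::comm_monoid_add"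
  shows "(\<Sum>r<k*n. g r) = (\<Sum>i<k. \<Sum>a<n. g (i*n + a))"
proof -
  have "(\<Sum>r<k*n. g r) = (\<Sum>i<k. sum g {i*n..<i*n + n})"
    by (rule sum.nat_group[symmetric])
  also have "\<dots> = (\<Sum>i<k. \<Sum>a<n. g (i*n + a))"
  proof (rule sum.cong[OF refl])
    fix i
    show "sum g {i*n..<i*n + n} = (\<Sum>a<n. g (i*n + a))"
      using sum.shift_bounds_nat_ivl[of g 0 "i*n" n] by (simp add: atLeast0LessThan add.commute)
  qed
  finally show ?thesis .
qed

lemma sum_sum_delta_outer:
  fixes i k n :: nat and H :: "nat \<Rightarrow> nat \<Rightarrow> 'a::comm_monoid_add"
  assumes "i < k"
  shows "(\<Sum>j<k. \<Sum>b<n. if j = i then H j b else 0) = (\<Sum>b<n. H i b)"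
proof -
  have "(\<Sum>j<k. \<Sum>b<n. if j = i then H j b else 0) = (\<Sum>j<k. if j = i then \<Sum>b<n. H j b else 0)"
    by (intro sum.cong refl) simp
  also have "\<dots> = (\<Sum>b<n. H i b)"
    using assms by (subst sum.delta) auto
  finally show ?thesis .
qed

lemma block_index_less [simp]:
  fixes i k a n :: nat
  assumes "i < k" "a < n"
  shows "i*n + a < k*n"
proof -
  have "i*n + a < Suc i * n" using assms(2) by simp
  also have "\<dots> \<le> k*n" using assms(1) by (intro mult_le_mono1) simp
  finally show ?thesis .
qed

lemma index_mult_mat_sum:
  assumes "A \<in> carrier_mat m n" "B \<in> carrier_mat n p" "i < m" "j < p"
  shows "(A * B) $$ (i,j) = (\<Sum>t<n. A $$ (i,t) * B $$ (t,j))"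
  using assms by (simp add: scalar_prod_def lessThan_atLeast0)

lemma dim_kron [simp]:
  "dim_row (kron A B) = dim_row A * dim_row B" "dim_col (kron A B) = dim_col A * dim_col B"
  by (simp_all add: kron_def)

lemma index_kron [simp]:
  assumes "r < dim_row A * dim_row B" "s < dim_col A * dim_col B"
  shows "kron A B $$ (r,s) =
    A $$ (r div dim_row B, s div dim_col B) * B $$ (r mod dim_row B, s mod dim_col B)"
  using assms by (simp add: kron_def)

lemma kron_carrier_mat [simp]:
  assumes "A \<in> carrier_mat k k'" "B \<in> carrier_mat n n'"
  shows "kron A B \<in> carrier_mat (k*n) (k'*n')"
  using carrier_matD[OF assms(1)] carrier_matD[OF assms(2)] by (intro carrier_matI) simp_all

lemma div_mod_less_of_less_mult:
  fixes r k n :: nat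
  assumes "r < k*n"
  shows "r div n < k" "r mod n < n"
proof -
  have "0 < n" using assms by (cases "n = 0") auto
  then show "r div n < k" "r mod n < n" using assms by (auto simp: less_mult_imp_div_less)
qed

lemma adjoint_kron: "adjoint (kron A B) = kron (adjoint A) (adjoint B)"
proof (rule eq_matI)
  fix r s assume "r < dim_row (kron (adjoint A) (adjoint B))" "s < dim_col (kron (adjoint A) (adjoint B))"
  then have "r < dim_col A * dim_col B" "s < dim_row A * dim_row B"
    by (simp_all add: adjoint_def)
  then show "adjoint (kron A B) $$ (r,s) = kron (adjoint A) (adjoint B) $$ (r,s)"
    by (simp add: adjoint_def div_mod_less_of_less_mult)
qed (simp_all add: adjoint_def)

lemma mult_kron:
  assumes A: "A \<in> carrier_mat k k" and C: "C \<in> carrier_mat k k"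
    and B: "B \<in> carrier_mat n n" and D: "D \<in> carrier_mat n n"
  shows "kron A B * kron C D = kron (A * C) (B * D)"
proof (rule eq_matI)
  fix r s assume "r < dim_row (kron (A * C) (B * D))" "s < dim_col (kron (A * C) (B * D))"
  then have rs: "r < k*n" "s < k*n" using A B C D by simp_all
  note bounds = div_mod_less_of_less_mult[OF rs(1)] div_mod_less_of_less_mult[OF rs(2)]
  have "(kron A B * kron C D) $$ (r,s) = (\<Sum>t<k*n. kron A B $$ (r,t) * kron C D $$ (t,s))"
    using A B C D rs by (intro index_mult_mat_sum) auto
  also have "\<dots> = (\<Sum>j<k. \<Sum>b<n. kron A B $$ (r, j*n + b) * kron C D $$ (j*n + b, s))"
    by (rule sum_lessThan_mult_split)
  also have "\<dots> = (\<Sum>j<k. \<Sum>b<n. (A $$ (r div n, j) * C $$ (j, s div n)) *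
                                   (B $$ (r mod n, b) * D $$ (b, s mod n)))"
    using A B C D rs by (intro sum.cong refl) (simp add: mult_ac)
  also have "\<dots> = (\<Sum>j<k. A $$ (r div n, j) * C $$ (j, s div n)) *
                    (\<Sum>b<n. B $$ (r mod n, b) * D $$ (b, s mod n))"
    by (simp add: sum_product)
  also have "\<dots> = (A * C) $$ (r div n, s div n) * (B * D) $$ (r mod n, s mod n)"
    using index_mult_mat_sum[OF A C bounds(1,3)] index_mult_mat_sum[OF B D bounds(2,4)] by simp
  also have "\<dots> = kron (A * C) (B * D) $$ (r,s)"
    using A B C D rs by simp
  finally show "(kron A B * kron C D) $$ (r,s) = kron (A * C) (B * D) $$ (r,s)" .
qed (use A B C D in simp_all)

lemma mtrace_diff:
  assumes "A \<in> carrier_mat n n" "B \<in> carrier_mat n n"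
  shows "mtrace (A - B) = mtrace A - mtrace B"
proof -
  have "mtrace (A - B) = (\<Sum>i<n. A $$ (i,i) - B $$ (i,i))"
    using assms unfolding mtrace_def by (intro sum.cong) auto
  then show ?thesis
    using assms by (simp add: mtrace_def sum_subtractf)
qed

lemma mtrace_smult:
  assumes "A \<in> carrier_mat n n"
  shows "mtrace (c \<cdot>\<^sub>m A) = c * mtrace A"
  using assms unfolding mtrace_def sum_distrib_left by (intro sum.cong) auto

lemma mtrace_kron:
  assumes "A \<in> carrier_mat k k" "B \<in> carrier_mat n n"
  shows "mtrace (kron A B) = mtrace A * mtrace B"
  using assms by (simp add: mtrace_def sum_lessThan_mult_split sum_product)

lemma smult_kron: "c \<cdot>\<^sub>m kron A B = kron (c \<cdot>\<^sub>m A) B"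
  by (rule eq_matI) (simp_all add: mult.assoc div_mod_less_of_less_mult)

section \<open>Positive semidefinite matrices and their square roots\<close>

definition quad_form :: "nat \<Rightarrow> complex mat \<Rightarrow> (nat \<Rightarrow> complex) \<Rightarrow> complex" where
  "quad_form n B f = (\<Sum>i<n. \<Sum>j<n. cnj (f i) * B $$ (i,j) * f j)"

lemma psdI:
  assumes "B \<in> carrier_mat n n" "adjoint B = B" "\<And>f. 0 \<le> Re (quad_form n B f)"
  shows "psd n B"
  using assms by (simp add: psd_def quad_form_def)

lemma psd_carrier: "psd n B \<Longrightarrow> B \<in> carrier_mat n n"
  by (simp add: psd_def)

lemma psd_adjoint: "psd n B \<Longrightarrow> adjoint B = B"
  by (simp add: psd_def)

lemma psd_quad_form_nonneg:
  assumes "psd n B"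
  shows "0 \<le> Re (quad_form n B f)"
proof -
  have "vec n f \<in> carrier_vec n" by simp
  with assms have "0 \<le> Re (quad_form n B (\<lambda>i. vec n f $ i))"
    unfolding psd_def quad_form_def by blast
  also have "quad_form n B (\<lambda>i. vec n f $ i) = quad_form n B f"
    unfolding quad_form_def by (intro sum.cong refl) simp
  finally show ?thesis .
qed

lemma psd_hermitian:
  assumes "psd n B" "i < n" "j < n"
  shows "B $$ (i,j) = cnj (B $$ (j,i))"
proof -
  have "B $$ (i,j) = adjoint B $$ (i,j)" using psd_adjoint[OF assms(1)] by simp
  also have "\<dots> = cnj (B $$ (j,i))" using psd_carrier[OF assms(1)] assms(2,3) by (simp add: adjoint_def)
  finally show ?thesis .
qed

lemma linear_coeff_zero_if_quadratic_nonneg: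
  fixes a b :: real
  assumes "\<And>t. 0 \<le> 2*t*a + t^2*b"
  shows "a = 0"
proof (rule ccontr)
  assume "a \<noteq> 0"
  define s where "s = \<bar>b\<bar> + 1"
  have s: "s > 0" "b - 2*s < 0" unfolding s_def by auto
  have "0 \<le> 2*(-a/s)*a + (-a/s)^2*b" by (rule assms)
  then have "0 \<le> (2*(-a/s)*a + (-a/s)^2*b) * s^2" by simp
  also have "\<dots> = a^2 * (b - 2*s)" using s by (simp add: field_simps power2_eq_square)
  also have "\<dots> < 0" using \<open>a \<noteq> 0\<close> s by (simp add: mult_pos_neg)
  finally show False by simp
qed

lemma quad_form_add_single:
  fixes f :: "nat \<Rightarrow> complex"
  assumes B: "psd n B" and k: "k < n"
  defines "z \<equiv> \<Sum>j<n. B $$ (k,j) * f j"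
  shows "Re (quad_form n B (\<lambda>i. f i + (if i = k then w else 0))) =
    Re (quad_form n B f) + 2 * Re (cnj w * z) + Re (cnj w * w * B $$ (k,k))"
proof -
  have col: "(\<Sum>i<n. cnj (f i) * B $$ (i,k)) = cnj z"
  proof -
    have "(\<Sum>i<n. cnj (f i) * B $$ (i,k)) = (\<Sum>i<n. cnj (B $$ (k,i) * f i))"
    proof (rule sum.cong[OF refl])
      fix i assume "i \<in> {..<n}"
      then have "B $$ (i,k) = cnj (B $$ (k,i))" by (intro psd_hermitian[OF B _ k]) simp
      then show "cnj (f i) * B $$ (i,k) = cnj (B $$ (k,i) * f i)" by (simp add: mult.commute)
    qed
    then show ?thesis by (simp add: z_def cnj_sum)
  qed
  have expand: "cnj (f i + (if i = k then w else 0)) * B $$ (i,j) * (f j + (if j = k then w else 0)) =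
      cnj (f i) * B $$ (i,j) * f j + (if j = k then cnj (f i) * B $$ (i,j) * w else 0)
      + (if i = k then cnj w * B $$ (i,j) * f j else 0)
      + (if i = k then if j = k then cnj w * w * B $$ (i,j) else 0 else 0)" for i j
    by (simp add: algebra_simps)
  have "quad_form n B (\<lambda>i. f i + (if i = k then w else 0)) =
      quad_form n B f + (\<Sum>i<n. cnj (f i) * B $$ (i,k)) * w + cnj w * z + cnj w * w * B $$ (k,k)"
    unfolding quad_form_def expand sum.distrib using k
    by (simp add: sum_sum_delta_outer z_def sum_distrib_left sum_distrib_right mult.assoc)
  also have "\<dots> = quad_form n B f + w * cnj z + cnj w * z + cnj w * w * B $$ (k,k)"
    by (simp add: col mult.commute)
  finally show ?thesis by simp
qed

lemma psd_quad_form_zero_imp_mult_zero: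
  assumes B: "psd n B" and k: "k < n" and zero: "Re (quad_form n B f) = 0"
  shows "(\<Sum>j<n. B $$ (k,j) * f j) = 0"
proof -
  define z where "z = (\<Sum>j<n. B $$ (k,j) * f j)"
  have nonneg: "0 \<le> 2 * Re (cnj w * z) + Re (cnj w * w * B $$ (k,k))" for w
    using psd_quad_form_nonneg[OF B, of "\<lambda>i. f i + (if i = k then w else 0)"]
    unfolding quad_form_add_single[OF B k] zero z_def by simp
  have "Re z = 0"
  proof (rule linear_coeff_zero_if_quadratic_nonneg)
    fix t :: real
    show "0 \<le> 2*t*Re z + t^2 * Re (B $$ (k,k))"
      using nonneg[of "complex_of_real t"] by (simp add: power2_eq_square)
  qed
  moreover have "Im z = 0"
  proof (rule linear_coeff_zero_if_quadratic_nonneg)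
    fix t :: real
    show "0 \<le> 2*t*Im z + t^2 * Re (B $$ (k,k))"
      using nonneg[of "complex_of_real t * \<i>"] by (simp add: power2_eq_square)
  qed
  ultimately show ?thesis by (simp add: z_def complex_eq_iff)
qed

lemma hermitian_square_diag_zero_imp_zero:
  fixes d :: "nat \<Rightarrow> nat \<Rightarrow> complex"
  assumes herm: "\<And>i j. i < n \<Longrightarrow> j < n \<Longrightarrow> d i j = cnj (d j i)"
    and sq: "(\<Sum>l<n. d j l * d l j) = 0" and "j < n" "l < n"
  shows "d l j = 0"
proof -
  have "(\<Sum>l<n. d j l * d l j) = complex_of_real (\<Sum>l<n. (cmod (d l j))\<^sup>2)"
    unfolding of_real_sum
  proof (rule sum.cong[OF refl])
    fix l assume "l \<in> {..<n}"
    then have "d j l = cnj (d l j)" by (intro herm) (simp_all add: \<open>j < n\<close>)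
    then show "d j l * d l j = complex_of_real ((cmod (d l j))\<^sup>2)"
      by (simp only: complex_norm_square mult.commute)
  qed
  then have "(\<Sum>l<n. (cmod (d l j))\<^sup>2) = 0"
    using sq by (metis of_real_eq_0_iff)
  then show ?thesis
    using \<open>l < n\<close> by (simp add: sum_nonneg_eq_0_iff)
qed

text \<open>\<open>tr(XYZ)\<close> for matrices given by entry functions, so that the algebra needs no carrier conditions.\<close>
definition trace3 :: "nat \<Rightarrow> (nat \<Rightarrow> nat \<Rightarrow> complex) \<Rightarrow> (nat \<Rightarrow> nat \<Rightarrow> complex) \<Rightarrow>
    (nat \<Rightarrow> nat \<Rightarrow> complex) \<Rightarrow> complex" where
  "trace3 n x y z = (\<Sum>j<n. \<Sum>k<n. \<Sum>l<n. x j k * y k l * z l j)"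

lemma trace3_rotate: "trace3 n x y z = trace3 n y z x"
proof -
  have "trace3 n x y z = (\<Sum>k<n. \<Sum>j<n. \<Sum>l<n. x j k * y k l * z l j)"
    unfolding trace3_def by (rule sum.swap)
  also have "\<dots> = (\<Sum>k<n. \<Sum>l<n. \<Sum>j<n. x j k * y k l * z l j)"
    by (intro sum.cong refl sum.swap)
  also have "\<dots> = trace3 n y z x"
    unfolding trace3_def by (simp add: mult_ac)
  finally show ?thesis .
qed

lemma trace3_cong_mult:
  assumes "\<And>i j. i < n \<Longrightarrow> j < n \<Longrightarrow> (\<Sum>k<n. x i k * y k j) = (\<Sum>k<n. x' i k * y' k j)"
  shows "trace3 n x y z = trace3 n x' y' z"
proof -
  have split: "trace3 n x y z = (\<Sum>j<n. \<Sum>l<n. (\<Sum>k<n. x j k * y k l) * z l j)" for x y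
    unfolding trace3_def sum_distrib_right by (intro sum.cong refl sum.swap)
  show ?thesis
    unfolding split using assms by simp
qed

text \<open>In matrix terms: \<open>B\<^sup>2 = C\<^sup>2\<close> implies \<open>tr((B - C)(B + C)(B - C)) = 0\<close>, by cyclicity of the trace.\<close>
lemma trace3_diff_sum_diff_eq_0:
  assumes "\<And>i j. i < n \<Longrightarrow> j < n \<Longrightarrow> (\<Sum>k<n. b i k * b k j) = (\<Sum>k<n. c i k * c k j)"
  shows "trace3 n (\<lambda>i j. b i j - c i j) (\<lambda>i j. b i j + c i j) (\<lambda>i j. b i j - c i j) = 0"
proof -
  have "trace3 n (\<lambda>i j. b i j - c i j) (\<lambda>i j. b i j + c i j) (\<lambda>i j. b i j - c i j) =
     trace3 n b b b + trace3 n b c b - trace3 n c b b - trace3 n c c b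
     - trace3 n b b c - trace3 n b c c + trace3 n c b c + trace3 n c c c"
    unfolding trace3_def by (simp add: algebra_simps sum.distrib sum_subtractf)
  moreover have "trace3 n b b b = trace3 n c c b" "trace3 n b b c = trace3 n c c c"
    using assms by (auto intro: trace3_cong_mult)
  ultimately show ?thesis
    using trace3_rotate[of n b c b] trace3_rotate[of n c b b] trace3_rotate[of n b c c]
      trace3_rotate[of n c b c]
    by simp
qed

lemma trace3_sandwich_eq_sum_quad_form:
  fixes d :: "nat \<Rightarrow> nat \<Rightarrow> complex"
  assumes herm: "\<And>i j. i < n \<Longrightarrow> j < n \<Longrightarrow> d i j = cnj (d j i)"
  shows "trace3 n d (\<lambda>i j. B $$ (i,j) + C $$ (i,j)) d =
    (\<Sum>j<n. quad_form n B (\<lambda>l. d l j) + quad_form n C (\<lambda>l. d l j))"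
  unfolding trace3_def quad_form_def sum.distrib[symmetric]
proof (intro sum.cong refl)
  fix j k l assume j: "j \<in> {..<n}" and k: "k \<in> {..<n}"
  have "d j k = cnj (d k j)" by (rule herm) (use j k in simp_all)
  then show "d j k * (B $$ (k,l) + C $$ (k,l)) * d l j =
      cnj (d k j) * B $$ (k,l) * d l j + cnj (d k j) * C $$ (k,l) * d l j"
    by (simp add: algebra_simps)
qed

text \<open>With \<open>D = B - C\<close>, \<open>tr(DBD) + tr(DCD) = tr(D(B + C)D) = 0\<close>; both summands are nonnegative, so
  every column of \<open>D\<close> lies in the kernels of \<open>B\<close> and \<open>C\<close>. Then \<open>D\<^sup>2 = 0\<close>, and \<open>D\<close> is hermitian.\<close>
lemma psd_square_eq_imp_eq:
  assumes B: "psd n B" and C: "psd n C" and sq: "B * B = C * C"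
  shows "B = C"
proof -
  define d where "d = (\<lambda>i j. B $$ (i,j) - C $$ (i,j))"
  have cB: "B \<in> carrier_mat n n" and cC: "C \<in> carrier_mat n n"
    using B C by (simp_all add: psd_carrier)
  have d_herm: "d i j = cnj (d j i)" if "i < n" "j < n" for i j
    using psd_hermitian[OF B that] psd_hermitian[OF C that] by (simp add: d_def)
  have BB_CC: "(\<Sum>k<n. B $$ (i,k) * B $$ (k,j)) = (\<Sum>k<n. C $$ (i,k) * C $$ (k,j))"
    if "i < n" "j < n" for i j
    using index_mult_mat_sum[OF cB cB that] index_mult_mat_sum[OF cC cC that] sq by simp
  have "trace3 n d (\<lambda>i j. B $$ (i,j) + C $$ (i,j)) d = 0"
    unfolding d_def by (rule trace3_diff_sum_diff_eq_0) (rule BB_CC)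
  moreover note trace3_sandwich_eq_sum_quad_form[OF d_herm, where B=B and C=C]
  ultimately have "Re (\<Sum>j<n. quad_form n B (\<lambda>l. d l j) + quad_form n C (\<lambda>l. d l j)) = 0"
    by simp
  then have "(\<Sum>j<n. Re (quad_form n B (\<lambda>l. d l j)) + Re (quad_form n C (\<lambda>l. d l j))) = 0"
    by (simp add: Re_sum)
  then have "Re (quad_form n B (\<lambda>l. d l j)) = 0 \<and> Re (quad_form n C (\<lambda>l. d l j)) = 0"
    if "j < n" for j
    using that psd_quad_form_nonneg[OF B] psd_quad_form_nonneg[OF C]
    by (simp add: sum_nonneg_eq_0_iff add_nonneg_eq_0_iff)
  then have "(\<Sum>l<n. B $$ (k,l) * d l j) = 0 \<and> (\<Sum>l<n. C $$ (k,l) * d l j) = 0"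
    if "k < n" "j < n" for k j
    using that psd_quad_form_zero_imp_mult_zero[OF B] psd_quad_form_zero_imp_mult_zero[OF C] by blast
  moreover have "(\<Sum>l<n. d k l * d l j) =
      (\<Sum>l<n. B $$ (k,l) * d l j) - (\<Sum>l<n. C $$ (k,l) * d l j)" for k j
    unfolding sum_subtractf[symmetric] by (intro sum.cong refl) (simp add: d_def algebra_simps)
  ultimately have square_zero: "(\<Sum>l<n. d k l * d l j) = 0" if "k < n" "j < n" for k j
    using that by simp
  have "d i j = 0" if "i < n" "j < n" for i j
    by (rule hermitian_square_diag_zero_imp_zero[OF d_herm square_zero[OF that(2) that(2)] that(2,1)])
  then show "B = C"
    using cB cC by (intro eq_matI) (auto simp: d_def)
qed

lemma mat_sqrt_square:
  assumes "psd n B"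
  shows "mat_sqrt n (B * B) = B"
  unfolding mat_sqrt_def
  using assms psd_square_eq_imp_eq by (intro the_equality) auto

definition real_diag :: "nat \<Rightarrow> (nat \<Rightarrow> real) \<Rightarrow> complex mat" where
  "real_diag n x = mat n n (\<lambda>(i,j). if i = j then complex_of_real (x i) else 0)"

lemma real_diag_carrier_mat [simp]: "real_diag n x \<in> carrier_mat n n"
  and dim_real_diag [simp]: "dim_row (real_diag n x) = n" "dim_col (real_diag n x) = n"
  by (simp_all add: real_diag_def)

lemma index_real_diag [simp]:
  "i < n \<Longrightarrow> j < n \<Longrightarrow> real_diag n x $$ (i,j) = (if i = j then complex_of_real (x i) else 0)"
  by (simp add: real_diag_def)

lemma one_mat_eq_real_diag: "1\<^sub>m n = real_diag n (\<lambda>_. 1)"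
  by (rule eq_matI) simp_all

lemma smult_real_diag: "complex_of_real c \<cdot>\<^sub>m real_diag n x = real_diag n (\<lambda>i. c * x i)"
  by (rule eq_matI) simp_all

lemma real_diag_add: "real_diag n x + real_diag n y = real_diag n (\<lambda>i. x i + y i)"
  by (rule eq_matI) simp_all

lemma real_diag_mult: "real_diag n x * real_diag n y = real_diag n (\<lambda>i. x i * y i)"
proof (rule eq_matI)
  fix i j assume "i < dim_row (real_diag n (\<lambda>i. x i * y i))" "j < dim_col (real_diag n (\<lambda>i. x i * y i))"
  then have ij: "i < n" "j < n" by simp_all
  then have "(real_diag n x * real_diag n y) $$ (i,j) =
      (\<Sum>t<n. real_diag n x $$ (i,t) * real_diag n y $$ (t,j))"
    by (intro index_mult_mat_sum) simp_all
  also have "\<dots> = (\<Sum>t<n. if t = i then (if i = j then complex_of_real (x i * y i) else 0) else 0)"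
    using ij by (intro sum.cong refl) auto
  also have "\<dots> = real_diag n (\<lambda>i. x i * y i) $$ (i,j)"
    using ij by simp
  finally show "(real_diag n x * real_diag n y) $$ (i,j) = real_diag n (\<lambda>i. x i * y i) $$ (i,j)" .
qed simp_all

lemma real_diag_mult_commute: "real_diag n x * real_diag n y = real_diag n y * real_diag n x"
  by (simp add: real_diag_mult mult.commute)

lemma adjoint_real_diag: "adjoint (real_diag n x) = real_diag n x"
  by (rule eq_matI) (simp_all add: adjoint_def)

lemma mtrace_real_diag: "mtrace (real_diag n x) = complex_of_real (\<Sum>i<n. x i)"
  by (simp add: mtrace_def)

lemma psd_real_diag:
  assumes "\<And>i. i < n \<Longrightarrow> 0 \<le> x i"
  shows "psd n (real_diag n x)"
proof (rule psdI)
  fix f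
  have "quad_form n (real_diag n x) f = (\<Sum>i<n. complex_of_real (x i) * (cnj (f i) * f i))"
    unfolding quad_form_def
  proof (rule sum.cong[OF refl])
    fix i assume i: "i \<in> {..<n}"
    then have "(\<Sum>j<n. cnj (f i) * real_diag n x $$ (i,j) * f j) =
        (\<Sum>j<n. if j = i then complex_of_real (x i) * (cnj (f i) * f i) else 0)"
      by (intro sum.cong refl) auto
    then show "(\<Sum>j<n. cnj (f i) * real_diag n x $$ (i,j) * f j) =
        complex_of_real (x i) * (cnj (f i) * f i)"
      using i by simp
  qed
  then show "0 \<le> Re (quad_form n (real_diag n x) f)"
    using assms by (auto simp: Re_sum intro!: sum_nonneg)
qed (simp_all add: adjoint_real_diag)

lemma psd_one_mat: "psd n (1\<^sub>m n)"
  unfolding one_mat_eq_real_diag by (rule psd_real_diag) simp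

lemma adjoint_kron_real_diag:
  assumes "psd n T"
  shows "adjoint (kron (real_diag k x) T) = kron (real_diag k x) T"
  using psd_adjoint[OF assms] by (simp add: adjoint_kron adjoint_real_diag)

lemma psd_kron_real_diag:
  assumes x: "\<And>i. i < k \<Longrightarrow> 0 \<le> x i" and T: "psd n T"
  shows "psd (k*n) (kron (real_diag k x) T)"
proof (rule psdI)
  have cT: "T \<in> carrier_mat n n" using T by (rule psd_carrier)
  then show "kron (real_diag k x) T \<in> carrier_mat (k*n) (k*n)" by simp
  show "adjoint (kron (real_diag k x) T) = kron (real_diag k x) T"
    using T by (rule adjoint_kron_real_diag)
  fix f
  have "quad_form (k*n) (kron (real_diag k x) T) f =
      (\<Sum>i<k. \<Sum>a<n. \<Sum>j<k. \<Sum>b<n.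
         cnj (f (i*n + a)) * kron (real_diag k x) T $$ (i*n + a, j*n + b) * f (j*n + b))"
    unfolding quad_form_def by (simp only: sum_lessThan_mult_split)
  also have "\<dots> = (\<Sum>i<k. \<Sum>a<n. \<Sum>b<n.
         complex_of_real (x i) * (cnj (f (i*n + a)) * T $$ (a,b) * f (i*n + b)))"
  proof (rule sum.cong[OF refl], rule sum.cong[OF refl])
    fix i a assume i: "i \<in> {..<k}" and a: "a \<in> {..<n}"
    have "(\<Sum>j<k. \<Sum>b<n. cnj (f (i*n + a)) * kron (real_diag k x) T $$ (i*n + a, j*n + b) * f (j*n + b))
      = (\<Sum>j<k. \<Sum>b<n. if j = i then
           complex_of_real (x i) * (cnj (f (i*n + a)) * T $$ (a,b) * f (i*n + b)) else 0)"
      using i a cT by (intro sum.cong refl) auto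
    then show "(\<Sum>j<k. \<Sum>b<n. cnj (f (i*n + a)) * kron (real_diag k x) T $$ (i*n + a, j*n + b) * f (j*n + b))
      = (\<Sum>b<n. complex_of_real (x i) * (cnj (f (i*n + a)) * T $$ (a,b) * f (i*n + b)))"
      using i by (simp add: sum_sum_delta_outer)
  qed
  also have "\<dots> = (\<Sum>i<k. complex_of_real (x i) * quad_form n T (\<lambda>a. f (i*n + a)))"
    unfolding quad_form_def by (simp add: sum_distrib_left)
  finally show "0 \<le> Re (quad_form (k*n) (kron (real_diag k x) T) f)"
    using x psd_quad_form_nonneg[OF T] by (auto simp: Re_sum intro!: sum_nonneg)
qed

lemma trace_norm_kron_real_diag:
  assumes T: "psd n T"
  shows "trace_norm (kron (real_diag k x) T) = (\<Sum>i<k. \<bar>x i\<bar>) * Re (mtrace T)"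
proof -
  let ?X = "kron (real_diag k x) T" and ?B = "kron (real_diag k (\<lambda>i. \<bar>x i\<bar>)) T"
  have cT: "T \<in> carrier_mat n n" using T by (rule psd_carrier)
  have "adjoint ?X * ?X = ?B * ?B"
    unfolding adjoint_kron_real_diag[OF T] mult_kron[OF real_diag_carrier_mat real_diag_carrier_mat cT cT]
    by (simp add: real_diag_mult abs_mult_self_eq)
  moreover have "psd (k*n) ?B"
    using T by (intro psd_kron_real_diag) simp_all
  ultimately have "trace_norm ?X = Re (mtrace ?B)"
    using cT by (simp add: trace_norm_def mat_sqrt_square)
  also have "\<dots> = (\<Sum>i<k. \<bar>x i\<bar>) * Re (mtrace T)"
    by (simp add: mtrace_kron[OF real_diag_carrier_mat cT] mtrace_real_diag)
  finally show ?thesis .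
qed

section \<open>Partial trace\<close>

definition partial_trace :: "nat \<Rightarrow> nat \<Rightarrow> complex mat \<Rightarrow> complex mat" where
  "partial_trace d n \<rho> = mat n n (\<lambda>(a,b). \<Sum>i<d. \<rho> $$ (i*n + a, i*n + b))"

lemma quad_form_partial_trace:
  "quad_form n (partial_trace d n \<rho>) u =
    (\<Sum>i<d. quad_form (d*n) \<rho> (\<lambda>r. if r div n = i then u (r mod n) else 0))"
proof -
  have "quad_form n (partial_trace d n \<rho>) u =
      (\<Sum>i<d. \<Sum>a<n. \<Sum>b<n. cnj (u a) * \<rho> $$ (i*n + a, i*n + b) * u b)"
    unfolding quad_form_def partial_trace_def
    by (simp add: sum_distrib_left sum_distrib_right sum.swap[of _ "{..<d}"])
  also have "\<dots> = (\<Sum>i<d. quad_form (d*n) \<rho> (\<lambda>r. if r div n = i then u (r mod n) else 0))"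
  proof (rule sum.cong[OF refl])
    fix i assume i: "i \<in> {..<d}"
    have "quad_form (d*n) \<rho> (\<lambda>r. if r div n = i then u (r mod n) else 0) =
       (\<Sum>i'<d. \<Sum>a<n. if i' = i then (\<Sum>j'<d. \<Sum>b<n. if j' = i then
          cnj (u a) * \<rho> $$ (i*n + a, i*n + b) * u b else 0) else 0)"
      unfolding quad_form_def sum_lessThan_mult_split
      by (intro sum.cong refl) (auto intro!: sum.cong)
    also have "\<dots> = (\<Sum>a<n. \<Sum>b<n. cnj (u a) * \<rho> $$ (i*n + a, i*n + b) * u b)"
      using i by (simp add: sum_sum_delta_outer)
    finally show "(\<Sum>a<n. \<Sum>b<n. cnj (u a) * \<rho> $$ (i*n + a, i*n + b) * u b) =
        quad_form (d*n) \<rho> (\<lambda>r. if r div n = i then u (r mod n) else 0)" ..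
  qed
  finally show ?thesis .
qed

lemma psd_partial_trace:
  assumes "psd (d*n) \<rho>"
  shows "psd n (partial_trace d n \<rho>)"
proof (rule psdI)
  show "partial_trace d n \<rho> \<in> carrier_mat n n" by (simp add: partial_trace_def)
  show "adjoint (partial_trace d n \<rho>) = partial_trace d n \<rho>"
  proof (rule eq_matI)
    fix a b assume "a < dim_row (partial_trace d n \<rho>)" "b < dim_col (partial_trace d n \<rho>)"
    then have ab: "a < n" "b < n" by (simp_all add: partial_trace_def)
    have "(\<Sum>i<d. \<rho> $$ (i*n + a, i*n + b)) = (\<Sum>i<d. cnj (\<rho> $$ (i*n + b, i*n + a)))"
    proof (rule sum.cong[OF refl])
      fix i assume "i \<in> {..<d}"
      then show "\<rho> $$ (i*n + a, i*n + b) = cnj (\<rho> $$ (i*n + b, i*n + a))"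
        using ab by (intro psd_hermitian[OF assms]) simp_all
    qed
    then show "adjoint (partial_trace d n \<rho>) $$ (a,b) = partial_trace d n \<rho> $$ (a,b)"
      using ab by (simp add: adjoint_def partial_trace_def cnj_sum)
  qed (simp_all add: adjoint_def partial_trace_def)
  show "0 \<le> Re (quad_form n (partial_trace d n \<rho>) u)" for u
    unfolding quad_form_partial_trace Re_sum using psd_quad_form_nonneg[OF assms] by (rule sum_nonneg)
qed

lemma mtrace_partial_trace:
  assumes "\<rho> \<in> carrier_mat (d*n) (d*n)"
  shows "mtrace (partial_trace d n \<rho>) = mtrace \<rho>"
  using assms by (simp add: mtrace_def partial_trace_def sum_lessThan_mult_split sum.swap[of _ "{..<n}"])

section \<open>Trace-and-prepare maps\<close>

lemma ketbra_carrier_mat [simp]: "ketbra n a b \<in> carrier_mat n n"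
  by (simp add: ketbra_def)

lemma mtrace_ketbra:
  assumes "i < d"
  shows "mtrace (ketbra d i j) = (if i = j then 1 else 0)"
proof -
  have "mtrace (ketbra d i j) = (\<Sum>a<d. if a = i then (if i = j then 1 else 0) else 0)"
    unfolding mtrace_def ketbra_def by (intro sum.cong) auto
  then show ?thesis
    using assms by simp
qed

lemma density_ketbra_0:
  assumes "0 < d"
  shows "density d (ketbra d 0 0)"
proof -
  have "ketbra d 0 0 = real_diag d (\<lambda>i. if i = 0 then 1 else 0)"
    by (rule eq_matI) (simp_all add: ketbra_def)
  then have "psd d (ketbra d 0 0)"
    by (simp add: psd_real_diag)
  then show ?thesis
    using mtrace_ketbra[OF assms] by (simp add: density_def)
qed

lemma sum_kron_ketbra_index:
  assumes F: "\<And>a b. a < n \<Longrightarrow> b < n \<Longrightarrow> F a b \<in> carrier_mat k k" and rs: "r < k*n" "s < k*n"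
  shows "(\<Sum>a<n. \<Sum>b<n. kron (F a b) (ketbra n a b) $$ (r,s)) = F (r mod n) (s mod n) $$ (r div n, s div n)"
proof -
  note bounds = div_mod_less_of_less_mult[OF rs(1)] div_mod_less_of_less_mult[OF rs(2)]
  have "kron (F a b) (ketbra n a b) $$ (r,s) =
      (if a = r mod n then if b = s mod n then F a b $$ (r div n, s div n) else 0 else 0)"
    if "a < n" "b < n" for a b
    using F[OF that] rs bounds by (auto simp: ketbra_def)
  then have "(\<Sum>a<n. \<Sum>b<n. kron (F a b) (ketbra n a b) $$ (r,s)) =
      (\<Sum>a<n. \<Sum>b<n. if a = r mod n then if b = s mod n then
         F a b $$ (r div n, s div n) else 0 else 0)"
    by (intro sum.cong refl) simp
  also have "\<dots> = F (r mod n) (s mod n) $$ (r div n, s div n)"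
    using bounds by (simp add: sum_sum_delta_outer)
  finally show ?thesis .
qed

lemma choi_trace_prepare:
  assumes S: "\<forall>Y \<in> carrier_mat d d. S Y = mtrace Y \<cdot>\<^sub>m P" and P: "P \<in> carrier_mat k k"
  shows "choi d k S = kron P (1\<^sub>m d)"
proof (rule eq_matI)
  fix r s assume "r < dim_row (kron P (1\<^sub>m d))" "s < dim_col (kron P (1\<^sub>m d))"
  then have rs: "r < k*d" "s < k*d" using P by simp_all
  note bounds = div_mod_less_of_less_mult[OF rs(1)] div_mod_less_of_less_mult[OF rs(2)]
  have "choi d k S $$ (r,s) = (\<Sum>i<d. \<Sum>j<d. kron (S (ketbra d i j)) (ketbra d i j) $$ (r,s))"
    using rs by (simp add: choi_def)
  also have "\<dots> = S (ketbra d (r mod d) (s mod d)) $$ (r div d, s div d)"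
    using S P rs by (intro sum_kron_ketbra_index) auto
  also have "\<dots> = kron P (1\<^sub>m d) $$ (r,s)"
    using S P rs bounds carrier_matD[OF P] by (simp add: mtrace_ketbra)
  finally show "choi d k S $$ (r,s) = kron P (1\<^sub>m d) $$ (r,s)" .
qed (use P in \<open>simp_all add: choi_def\<close>)

lemma ext_id_trace_prepare:
  assumes S: "\<forall>Y \<in> carrier_mat d d. S Y = mtrace Y \<cdot>\<^sub>m P" and P: "P \<in> carrier_mat k k"
  shows "ext_id d k n S \<rho> = kron P (partial_trace d n \<rho>)"
proof (rule eq_matI)
  fix r s assume "r < dim_row (kron P (partial_trace d n \<rho>))" "s < dim_col (kron P (partial_trace d n \<rho>))"
  then have rs: "r < k*n" "s < k*n" using P by (simp_all add: partial_trace_def)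
  note bounds = div_mod_less_of_less_mult[OF rs(1)] div_mod_less_of_less_mult[OF rs(2)]
  have block: "block d n \<rho> a b \<in> carrier_mat d d" for a b
    by (simp add: block_def)
  have "ext_id d k n S \<rho> $$ (r,s) =
      (\<Sum>a<n. \<Sum>b<n. kron (S (block d n \<rho> a b)) (ketbra n a b) $$ (r,s))"
    using rs by (simp add: ext_id_def)
  also have "\<dots> = S (block d n \<rho> (r mod n) (s mod n)) $$ (r div n, s div n)"
    using S P rs block by (intro sum_kron_ketbra_index) auto
  also have "\<dots> = kron P (partial_trace d n \<rho>) $$ (r,s)"
    using S P rs bounds block carrier_matD[OF P]
    by (simp add: mtrace_def block_def partial_trace_def mult.commute)
  finally show "ext_id d k n S \<rho> $$ (r,s) = kron P (partial_trace d n \<rho>) $$ (r,s)" .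
qed (use P in \<open>simp_all add: ext_id_def partial_trace_def\<close>)

lemma me_norm_trace_prepare:
  assumes S: "\<forall>Y \<in> carrier_mat d d. S Y = mtrace Y \<cdot>\<^sub>m real_diag k x" and d: "0 < d"
  shows "me_norm d k S = (\<Sum>i<k. \<bar>x i\<bar>)"
proof -
  have "(1 / of_nat d) \<cdot>\<^sub>m choi d k S = kron (real_diag k (\<lambda>i. x i / d)) (1\<^sub>m d)"
    unfolding choi_trace_prepare[OF S real_diag_carrier_mat] smult_kron
    using smult_real_diag[of "1 / real d" k x] by simp
  then have "me_norm d k S = (\<Sum>i<k. \<bar>x i / d\<bar>) * Re (mtrace (1\<^sub>m d))"
    unfolding me_norm_def by (simp add: trace_norm_kron_real_diag[OF psd_one_mat])
  also have "\<dots> = (\<Sum>i<k. \<bar>x i / d\<bar>) * d"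
    by (simp add: mtrace_def)
  also have "\<dots> = (\<Sum>i<k. \<bar>x i\<bar>)"
    using d by (simp add: sum_divide_distrib[symmetric])
  finally show ?thesis .
qed

lemma trace_norm_ext_id_trace_prepare:
  assumes S: "\<forall>Y \<in> carrier_mat d d. S Y = mtrace Y \<cdot>\<^sub>m real_diag k x" and \<rho>: "density (d*n) \<rho>"
  shows "trace_norm (ext_id d k n S \<rho>) = (\<Sum>i<k. \<bar>x i\<bar>)"
proof -
  have psd: "psd (d*n) \<rho>" and tr: "mtrace \<rho> = 1"
    using \<rho> by (simp_all add: density_def)
  have "trace_norm (ext_id d k n S \<rho>) = (\<Sum>i<k. \<bar>x i\<bar>) * Re (mtrace (partial_trace d n \<rho>))"
    unfolding ext_id_trace_prepare[OF S real_diag_carrier_mat]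
    by (rule trace_norm_kron_real_diag[OF psd_partial_trace[OF psd]])
  also have "\<dots> = (\<Sum>i<k. \<bar>x i\<bar>)"
    using mtrace_partial_trace[OF psd_carrier[OF psd]] tr by simp
  finally show ?thesis .
qed

lemma diamond_norm_trace_prepare:
  assumes S: "\<forall>Y \<in> carrier_mat d d. S Y = mtrace Y \<cdot>\<^sub>m real_diag k x" and d: "0 < d"
  shows "diamond_norm d k S = (\<Sum>i<k. \<bar>x i\<bar>)"
proof -
  have \<rho>\<^sub>0: "density (d*1) (ketbra d 0 0)"
    using d by (simp add: density_ketbra_0)
  have "{trace_norm (ext_id d k n S \<rho>) | n \<rho>. 1 \<le> n \<and> density (d*n) \<rho>} = {\<Sum>i<k. \<bar>x i\<bar>}"
  proof (intro equalityI subsetI)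
    fix t assume "t \<in> {trace_norm (ext_id d k n S \<rho>) | n \<rho>. 1 \<le> n \<and> density (d*n) \<rho>}"
    then show "t \<in> {\<Sum>i<k. \<bar>x i\<bar>}"
      using trace_norm_ext_id_trace_prepare[OF S] by auto
  next
    fix t assume "t \<in> {\<Sum>i<k. \<bar>x i\<bar>}"
    then have "t = trace_norm (ext_id d k 1 S (ketbra d 0 0)) \<and> 1 \<le> (1::nat) \<and> density (d*1) (ketbra d 0 0)"
      using \<rho>\<^sub>0 trace_norm_ext_id_trace_prepare[OF S \<rho>\<^sub>0] by simp
    then show "t \<in> {trace_norm (ext_id d k n S \<rho>) | n \<rho>. 1 \<le> n \<and> density (d*n) \<rho>}"
      by blast
  qed
  then show ?thesis
    unfolding diamond_norm_def by simp
qed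

lemma meas_channel_diff_trace_prepare:
  assumes M: "\<And>i. i < K \<Longrightarrow> M i \<in> carrier_mat d d" and N: "\<And>i. i < K \<Longrightarrow> N i \<in> carrier_mat d d"
    and diff: "\<And>i. i < K \<Longrightarrow> M i - N i = complex_of_real (x i) \<cdot>\<^sub>m 1\<^sub>m d"
    and Y: "Y \<in> carrier_mat d d"
  shows "meas_channel K M Y - meas_channel K N Y = mtrace Y \<cdot>\<^sub>m real_diag K x"
proof (rule eq_matI)
  have tr: "mtrace (Y * M i) - mtrace (Y * N i) = complex_of_real (x i) * mtrace Y" if i: "i < K" for i
  proof -
    have "mtrace (Y * M i) - mtrace (Y * N i) = mtrace (Y * (M i - N i))"
      by (simp add: mult_minus_distrib_mat[OF Y M[OF i] N[OF i]]
          mtrace_diff[OF mult_carrier_mat[OF Y M[OF i]] mult_carrier_mat[OF Y N[OF i]]])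
    also have "\<dots> = complex_of_real (x i) * mtrace Y"
      by (simp add: diff[OF i] mult_smult_distrib[OF Y one_carrier_mat] right_mult_one_mat[OF Y] mtrace_smult[OF Y])
    finally show ?thesis .
  qed
  fix i j assume "i < dim_row (mtrace Y \<cdot>\<^sub>m real_diag K x)" "j < dim_col (mtrace Y \<cdot>\<^sub>m real_diag K x)"
  then show "(meas_channel K M Y - meas_channel K N Y) $$ (i,j) = (mtrace Y \<cdot>\<^sub>m real_diag K x) $$ (i,j)"
    using tr by (auto simp: meas_channel_def mult.commute)
qed (simp_all add: meas_channel_def)

lemma MEBC_if_scalar_differences:
  assumes d: "0 < d" and M: "is_povm d K M" and N: "is_povm d K N"
    and diff: "\<And>i. i < K \<Longrightarrow> M i - N i = complex_of_real (x i) \<cdot>\<^sub>m 1\<^sub>m d"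
  shows "MEBC d K M N"
proof -
  have "M i \<in> carrier_mat d d" "N i \<in> carrier_mat d d" if "i < K" for i
    using M N that by (simp_all add: is_povm_def psd_carrier)
  then have "\<forall>Y \<in> carrier_mat d d. meas_channel K M Y - meas_channel K N Y = mtrace Y \<cdot>\<^sub>m real_diag K x"
    using diff by (blast intro: meas_channel_diff_trace_prepare)
  from me_norm_trace_prepare[OF this d] diamond_norm_trace_prepare[OF this d]
  show ?thesis
    unfolding MEBC_def Let_def by simp
qed

lemma is_povm_2I:
  assumes M0: "psd d (M 0)" and M1: "psd d (M 1)" and sum: "M 0 + M 1 = 1\<^sub>m d"
  shows "is_povm d 2 M"
  unfolding is_povm_def
proof (intro conjI allI impI)
  fix i :: nat assume "i < 2"
  then show "psd d (M i)"
    using M0 M1 by (auto simp: numeral_2_eq_2 less_Suc_eq)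
next
  fix r c assume "r < d" "c < d"
  then show "(\<Sum>i<2. M i $$ (r,c)) = 1\<^sub>m d $$ (r,c)"
    using arg_cong[OF sum, of "\<lambda>A. A $$ (r,c)"] carrier_matD[OF psd_carrier[OF M1]]
    by (simp add: numeral_2_eq_2)
qed

lemma Mex_real_diag:
  "Mex 0 = real_diag 2 (\<lambda>j. if j = 0 then 9/10 else 3/5)"
  "Mex 1 = real_diag 2 (\<lambda>j. if j = 0 then 1/10 else 2/5)"
  by (rule eq_matI; auto simp: Mex_def M0ex_def numeral_2_eq_2 less_Suc_eq)+

lemma Nex_real_diag:
  "Nex 0 = real_diag 2 (\<lambda>j. if j = 0 then 1/2 else 1/5)"
  "Nex 1 = real_diag 2 (\<lambda>j. if j = 0 then 1/2 else 4/5)"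
  by (rule eq_matI; auto simp: Nex_def N0ex_def numeral_2_eq_2 less_Suc_eq)+

lemma is_povm_Mex: "is_povm 2 2 Mex"
proof (rule is_povm_2I)
  show "psd 2 (Mex 0)" "psd 2 (Mex 1)"
    unfolding Mex_real_diag by (auto intro!: psd_real_diag)
  show "Mex 0 + Mex 1 = 1\<^sub>m 2"
    unfolding Mex_real_diag real_diag_add one_mat_eq_real_diag
    by (intro arg_cong[where f="real_diag 2"] ext) simp
qed

lemma is_povm_Nex: "is_povm 2 2 Nex"
proof (rule is_povm_2I)
  show "psd 2 (Nex 0)" "psd 2 (Nex 1)"
    unfolding Nex_real_diag by (auto intro!: psd_real_diag)
  show "Nex 0 + Nex 1 = 1\<^sub>m 2"
    unfolding Nex_real_diag real_diag_add one_mat_eq_real_diag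
    by (intro arg_cong[where f="real_diag 2"] ext) simp
qed

lemma Mex_diff_Nex: "i < 2 \<Longrightarrow> Mex i - Nex i = complex_of_real (if i = 0 then 2/5 else -2/5) \<cdot>\<^sub>m 1\<^sub>m 2"
  by (rule eq_matI) (auto simp: Mex_def Nex_def M0ex_def N0ex_def numeral_2_eq_2 less_Suc_eq)

theorem corollary4:
  shows "(\<exists>d M N. 1 \<le> d \<and> is_povm d 2 M \<and> is_povm d 2 N \<and>
            M 0 * N 0 = N 0 * M 0 \<and> M 1 * N 1 = N 1 * M 1 \<and> MEBC d 2 M N)
       \<and> (is_povm 2 2 Mex \<and> is_povm 2 2 Nex \<and>
            Mex 0 * Nex 0 = Nex 0 * Mex 0 \<and> Mex 1 * Nex 1 = Nex 1 * Mex 1 \<and>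
            M0ex - N0ex = (2/5 :: complex) \<cdot>\<^sub>m 1\<^sub>m 2 \<and> MEBC 2 2 Mex Nex)"
proof -
  have comm: "Mex 0 * Nex 0 = Nex 0 * Mex 0" "Mex 1 * Nex 1 = Nex 1 * Mex 1"
    by (simp_all only: Mex_real_diag Nex_real_diag real_diag_mult_commute)
  have mebc: "MEBC 2 2 Mex Nex"
    by (rule MEBC_if_scalar_differences[OF _ is_povm_Mex is_povm_Nex Mex_diff_Nex]) simp_all
  have diff: "M0ex - N0ex = (2/5 :: complex) \<cdot>\<^sub>m 1\<^sub>m 2"
    using Mex_diff_Nex[of 0] by (simp add: Mex_def Nex_def)
  have "\<exists>d M N. 1 \<le> d \<and> is_povm d 2 M \<and> is_povm d 2 N \<and>
            M 0 * N 0 = N 0 * M 0 \<and> M 1 * N 1 = N 1 * M 1 \<and> MEBC d 2 M N"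
    using is_povm_Mex is_povm_Nex comm mebc by (intro exI[of _ "2::nat"] exI[of _ Mex] exI[of _ Nex]) simp
  then show ?thesis
    using is_povm_Mex is_povm_Nex comm diff mebc by blast
qed

end
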